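(* Let $R\subseteq S$ be a module-finite inclusion of normal $F$-finite domains of characteristic $p>0$ such that the induced extension of fraction fields $K\subseteq L$ is not separable, and let $e\ge1$. Then the only $\phi\in\mathrm{Hom}_R(R^{1/p^e},R)$ that extends to an element $\bar\phi\in\mathrm{Hom}_S(S^{1/p^e},S)$ (i.e. with $\bar\phi|_{R^{1/p^e}}=\phi$) is the zero map.
   Context: $R^{1/p^e}\subseteq S^{1/p^e}$ are the rings of $p^e$-th roots inside an algebraic closure of $L$. $F$-finite: Frobenius is finite. *)

theory Defs
  imports "HOL-Computational_Algebra.Polynomial"
begin

text \<open>All rings live inside one ambient field 'a (an algebraically closed field
  of characteristic p containing L). Subrings of it are automatically domains.\<close>

definition is_subring :: "'a::field set \<Rightarrow> bool" where
  "is_subring A \<longleftrightarrow> 0 \<in> A \<and> 1 \<in> A \<and>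
     (\<forall>x\<in>A. \<forall>y\<in>A. x + y \<in> A \<and> x - y \<in> A \<and> x * y \<in> A)"

definition frac_field :: "'a::field set \<Rightarrow> 'a set" where
  "frac_field A = {a / b | a b. a \<in> A \<and> b \<in> A \<and> b \<noteq> 0}"

definition module_finite :: "'a::field set \<Rightarrow> 'a set \<Rightarrow> bool" where
  "module_finite A B \<longleftrightarrow> (\<exists>G. finite G \<and> G \<subseteq> B \<and>
     B = {(\<Sum>g\<in>G. c g * g) | c. \<forall>g\<in>G. c g \<in> A})"

definition poly_over :: "'a::field set \<Rightarrow> 'a poly \<Rightarrow> bool" where
  "poly_over A f \<longleftrightarrow> (\<forall>i. coeff f i \<in> A)"

definition integral_over :: "'a::field set \<Rightarrow> 'a \<Rightarrow> bool" where
  "integral_over A x \<longleftrightarrow> (\<exists>f. lead_coeff f = 1 \<and> poly_over A f \<and> poly f x = 0)"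

definition normal_domain :: "'a::field set \<Rightarrow> bool" where
  "normal_domain A \<longleftrightarrow> is_subring A \<and>
     (\<forall>x\<in>frac_field A. integral_over A x \<longrightarrow> x \<in> A)"

text \<open>F-finite: the Frobenius map of A is finite, i.e. A is a finitely generated
  module over its image A^p.\<close>
definition F_finite :: "'a::field set \<Rightarrow> bool" where
  "F_finite A \<longleftrightarrow> module_finite ((\<lambda>r. r ^ CHAR('a)) ` A) A"

definition separable_elem :: "'a::field set \<Rightarrow> 'a \<Rightarrow> bool" where
  "separable_elem K y \<longleftrightarrow> (\<exists>f. f \<noteq> 0 \<and> poly_over K f \<and> poly f y = 0 \<and> rsquarefree f)"

definition separable_ext :: "'a::field set \<Rightarrow> 'a set \<Rightarrow> bool" where
  "separable_ext K L \<longleftrightarrow> (\<forall>y\<in>L. separable_elem K y)"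

definition root_ring :: "'a::field set \<Rightarrow> nat \<Rightarrow> 'a set" where
  "root_ring A e = {x. x ^ (CHAR('a) ^ e) \<in> A}"

definition hom_mod :: "'a::field set \<Rightarrow> 'a set \<Rightarrow> 'a set \<Rightarrow> ('a \<Rightarrow> 'a) set" where
  "hom_mod A M N = {f. (\<forall>x\<in>M. f x \<in> N) \<and>
     (\<forall>x\<in>M. \<forall>y\<in>M. f (x + y) = f x + f y) \<and>
     (\<forall>r\<in>A. \<forall>x\<in>M. f (r * x) = r * f x)}"

end

(* Take y in L inseparable over K. Its minimal polynomial g over K is irreducible with a repeated
   root, so g' = 0; after clearing denominators g = (k_0 + k_1 X + ... + k_m X^m)^p with k_j^p in R,
   k_m <> 0 and m < deg g. Thus the k_j lie in R^(1/p), which is contained in R^(1/p^e), and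
   k_0 + k_1 y + ... + k_m y^m = 0 is a relation of degree below that of y.
   Let psi extend phi and c be in R^(1/p^e). Writing y = s/t and applying psi to the relation
   sum_j s^j t^(m-j) c k_j = 0, S-linearity gives sum_j phi(c k_j) y^j = 0, a relation over R of
   degree at most m, so all phi(c k_j) vanish. For c = x k_m^(p^e - 1) this reads
   k_m^(p^e) phi(x) = 0, hence phi(x) = 0. *)

theory Submission
  imports Defs "HOL-Computational_Algebra.Primes"
begin

lemma subring_zero: "is_subring A \<Longrightarrow> 0 \<in> A"
  and subring_one: "is_subring A \<Longrightarrow> 1 \<in> A"
  and subring_add: "is_subring A \<Longrightarrow> x \<in> A \<Longrightarrow> y \<in> A \<Longrightarrow> x + y \<in> A"
  and subring_diff: "is_subring A \<Longrightarrow> x \<in> A \<Longrightarrow> y \<in> A \<Longrightarrow> x - y \<in> A"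
  and subring_mult: "is_subring A \<Longrightarrow> x \<in> A \<Longrightarrow> y \<in> A \<Longrightarrow> x * y \<in> A"
  unfolding is_subring_def by auto

lemma subring_uminus: "is_subring A \<Longrightarrow> x \<in> A \<Longrightarrow> - x \<in> A"
  using subring_diff[of A 0 x] by (simp add: subring_zero)

lemma subring_power: "is_subring A \<Longrightarrow> x \<in> A \<Longrightarrow> x ^ n \<in> A"
  by (induction n) (auto intro: subring_one subring_mult)

lemma subring_sum: "is_subring A \<Longrightarrow> (\<And>i. i \<in> I \<Longrightarrow> f i \<in> A) \<Longrightarrow> sum f I \<in> A"
  by (induction I rule: infinite_finite_induct) (auto intro: subring_zero subring_add)

lemma subring_of_nat: "is_subring A \<Longrightarrow> of_nat n \<in> A"
  by (induction n) (auto intro: subring_zero subring_one subring_add)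

lemmas subring_closed =
  subring_zero subring_one subring_add subring_diff subring_mult subring_uminus subring_power
  subring_sum subring_of_nat

definition is_subfield :: "'a::field set \<Rightarrow> bool" where
  "is_subfield K \<longleftrightarrow> is_subring K \<and> (\<forall>x\<in>K. inverse x \<in> K)"

lemma subfield_is_subring: "is_subfield K \<Longrightarrow> is_subring K"
  unfolding is_subfield_def by simp

lemma subfield_divide: "is_subfield K \<Longrightarrow> x \<in> K \<Longrightarrow> y \<in> K \<Longrightarrow> x / y \<in> K"
  unfolding is_subfield_def divide_inverse by (auto intro: subring_mult)

lemma subset_frac_field:
  assumes "is_subring R"
  shows "R \<subseteq> frac_field R"
proof
  fix x assume "x \<in> R"
  then show "x \<in> frac_field R"
    unfolding frac_field_def using subring_one[OF assms] by (intro CollectI exI[of _ x] exI[of _ 1]) simp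
qed

lemma frac_field_is_subfield:
  assumes R: "is_subring R"
  shows "is_subfield (frac_field R)"
proof -
  have quotient: "a / b \<in> frac_field R" if "a \<in> R" "b \<in> R" "b \<noteq> 0" for a b
    using that unfolding frac_field_def by blast
  have ring_ops: "x + y \<in> frac_field R \<and> x - y \<in> frac_field R \<and> x * y \<in> frac_field R"
    if x_frac: "x \<in> frac_field R" and y_frac: "y \<in> frac_field R" for x y
  proof -
    obtain a b where x: "x = a / b" "a \<in> R" "b \<in> R" "b \<noteq> 0"
      using x_frac unfolding frac_field_def by blast
    obtain c d where y: "y = c / d" "c \<in> R" "d \<in> R" "d \<noteq> 0"
      using y_frac unfolding frac_field_def by blast
    have "x + y = (a * d + c * b) / (b * d)" "x - y = (a * d - c * b) / (b * d)"
      "x * y = (a * c) / (b * d)"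
      using x y by (simp_all add: field_simps)
    then show ?thesis
      using x y by (auto intro!: quotient subring_closed[OF R])
  qed
  have "inverse x \<in> frac_field R" if x_frac: "x \<in> frac_field R" for x
  proof -
    obtain a b where x: "x = a / b" "a \<in> R" "b \<in> R" "b \<noteq> 0"
      using x_frac unfolding frac_field_def by blast
    show ?thesis
    proof (cases "a = 0")
      case True
      then show ?thesis
        using x subset_frac_field[OF R] subring_zero[OF R] by auto
    next
      case False
      then show ?thesis
        using x by (simp add: quotient)
    qed
  qed
  then show ?thesis
    unfolding is_subfield_def is_subring_def
    using ring_ops subset_frac_field[OF R] subring_zero[OF R] subring_one[OF R] by blast
qed

lemma frac_field_common_denominator:
  assumes R: "is_subring R"
  shows "finite I \<Longrightarrow> (\<forall>i\<in>I. f i \<in> frac_field R) \<Longrightarrow> \<exists>D\<in>R. D \<noteq> 0 \<and> (\<forall>i\<in>I. D * f i \<in> R)"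
proof (induction I rule: finite_induct)
  case empty
  then show ?case
    using subring_one[OF R] by (intro bexI[of _ 1]) auto
next
  case (insert i I)
  then obtain D where D: "D \<in> R" "D \<noteq> 0" "\<forall>j\<in>I. D * f j \<in> R"
    by auto
  obtain a b where ab: "f i = a / b" "a \<in> R" "b \<in> R" "b \<noteq> 0"
    using insert.prems unfolding frac_field_def by auto
  have "D * b * f j \<in> R" if "j \<in> I" for j
    using subring_mult[OF R ab(3) D(3)[rule_format, OF that]] by (simp add: ac_simps)
  moreover have "D * b * f i \<in> R"
    using ab D by (simp add: subring_mult[OF R])
  ultimately have "\<forall>j\<in>insert i I. D * b * f j \<in> R"
    by blast
  moreover have "D * b \<in> R" "D * b \<noteq> 0"
    using D ab by (auto intro: subring_mult[OF R])
  ultimately show ?case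
    by blast
qed

lemma poly_over_mono: "A \<subseteq> B \<Longrightarrow> poly_over A f \<Longrightarrow> poly_over B f"
  unfolding poly_over_def by blast

lemma poly_over_0: "is_subring A \<Longrightarrow> poly_over A 0"
  and poly_over_1: "is_subring A \<Longrightarrow> poly_over A 1"
  and poly_over_monom: "is_subring A \<Longrightarrow> c \<in> A \<Longrightarrow> poly_over A (monom c n)"
  and poly_over_add: "is_subring A \<Longrightarrow> poly_over A f \<Longrightarrow> poly_over A g \<Longrightarrow> poly_over A (f + g)"
  and poly_over_diff: "is_subring A \<Longrightarrow> poly_over A f \<Longrightarrow> poly_over A g \<Longrightarrow> poly_over A (f - g)"
  and poly_over_uminus: "is_subring A \<Longrightarrow> poly_over A f \<Longrightarrow> poly_over A (- f)"
  and poly_over_mult: "is_subring A \<Longrightarrow> poly_over A f \<Longrightarrow> poly_over A g \<Longrightarrow> poly_over A (f * g)"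
  and poly_over_pderiv: "is_subring A \<Longrightarrow> poly_over A f \<Longrightarrow> poly_over A (pderiv f)"
  unfolding poly_over_def
  by (auto simp: coeff_1 coeff_monom coeff_mult coeff_pderiv intro!: subring_closed)

lemmas poly_over_closed =
  poly_over_0 poly_over_1 poly_over_monom poly_over_add poly_over_diff poly_over_uminus
  poly_over_mult poly_over_pderiv

lemma poly_over_div_mod:
  assumes K: "is_subfield K" and d: "poly_over K d" "d \<noteq> 0"
  shows "poly_over K f \<Longrightarrow>
    \<exists>q r. poly_over K q \<and> poly_over K r \<and> f = q * d + r \<and> (r = 0 \<or> degree r < degree d)"
proof (induction "degree f" arbitrary: f rule: less_induct)
  case (less f)
  note closed = poly_over_closed[OF subfield_is_subring[OF K]]
  show ?case
  proof (cases "f = 0 \<or> degree f < degree d")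
    case True
    then show ?thesis
      using less.prems closed by (intro exI[of _ 0] exI[of _ f]) auto
  next
    case False
    define c where "c = lead_coeff f / lead_coeff d"
    define k where "k = degree f - degree d"
    define f' where "f' = f - monom c k * d"
    have "c \<in> K"
      using less.prems d unfolding c_def poly_over_def by (auto intro: subfield_divide[OF K])
    then have monom_K: "poly_over K (monom c k)"
      by (intro closed)
    then have f'_K: "poly_over K f'"
      unfolding f'_def using less.prems d closed by metis
    have "coeff f' n = 0" if "n \<ge> degree f" for n
      using False d(2) that unfolding f'_def c_def k_def
      by (cases "n = degree f") (auto simp: coeff_monom_mult coeff_eq_0)
    then have "f' = 0 \<or> degree f' < degree f"
      by (metis leading_coeff_0_iff not_le)
    then obtain q r where qr: "poly_over K q" "poly_over K r" "f' = q * d + r" "r = 0 \<or> degree r < degree d"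
      using less.hyps[OF _ f'_K] d closed by (metis add_0 mult_zero_left)
    have "f = (q + monom c k) * d + r"
      using qr(3) unfolding f'_def by (simp add: algebra_simps)
    then show ?thesis
      using qr monom_K closed by blast
  qed
qed

lemma poly_over_bezout_divisor:
  assumes K: "is_subfield K" and f: "poly_over K f" and g: "poly_over K g" "g \<noteq> 0"
  shows "\<exists>h u v q. poly_over K u \<and> poly_over K v \<and> poly_over K q \<and>
    h = u * f + v * g \<and> h \<noteq> 0 \<and> f = q * h \<and> degree h \<le> degree g"
proof -
  have K_ring: "is_subring K"
    using K by (rule subfield_is_subring)
  define I where "I = {u * f + v * g | u v. poly_over K u \<and> poly_over K v}"
  have "g = 0 * f + 1 * g"
    by simp
  then have "g \<in> I"
    unfolding I_def using poly_over_0[OF K_ring] poly_over_1[OF K_ring] by blast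
  then obtain h where h: "h \<in> I" "h \<noteq> 0"
    and h_min: "\<And>h'. h' \<in> I \<Longrightarrow> h' \<noteq> 0 \<Longrightarrow> degree h \<le> degree h'"
    using ex_has_least_nat[of "\<lambda>h. h \<in> I \<and> h \<noteq> 0" g degree] g(2) by blast
  obtain u v where uv: "poly_over K u" "poly_over K v" "h = u * f + v * g"
    using h(1) unfolding I_def by blast
  then have "poly_over K h"
    using f g(1) by (simp add: poly_over_add[OF K_ring] poly_over_mult[OF K_ring])
  then obtain q r where qr: "poly_over K q" "f = q * h + r" "r = 0 \<or> degree r < degree h"
    using poly_over_div_mod[OF K _ h(2) f] by blast
  have "r = (1 - q * u) * f + (- (q * v)) * g"
    using qr(2) unfolding uv(3) by (simp add: algebra_simps)
  moreover have "poly_over K (1 - q * u)" "poly_over K (- (q * v))"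
    using qr(1) uv(1,2)
    by (simp_all add: poly_over_diff[OF K_ring] poly_over_1[OF K_ring] poly_over_mult[OF K_ring]
        poly_over_uminus[OF K_ring])
  ultimately have "r \<in> I"
    unfolding I_def by blast
  then have "r = 0"
    using h_min qr(3) by (meson leD)
  then show ?thesis
    using qr uv h(2) h_min[OF \<open>g \<in> I\<close> g(2)] by auto
qed

lemma not_rsquarefree_common_root:
  fixes g :: "'a::idom poly"
  assumes "g \<noteq> 0" "\<not> rsquarefree g"
  shows "\<exists>a. poly g a = 0 \<and> poly (pderiv g) a = 0"
proof -
  obtain a where "order a g \<noteq> 0" "order a g \<noteq> 1"
    using assms unfolding rsquarefree_def by blast
  then have "[:-a, 1:] ^ 2 dvd g"
    using order_divides by fastforce
  then obtain m where g: "g = [:-a, 1:] ^ 2 * m"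
    by (elim dvdE)
  have "pderiv g = [:-a, 1:] ^ 2 * pderiv m + m * pderiv ([:-a, 1:] ^ 2)"
    unfolding g by (rule pderiv_mult)
  also have "pderiv ([:-a, 1:] ^ 2) = smult 2 [:-a, 1:] * pderiv [:-a, 1:]"
    using pderiv_power_Suc[of "[:-a, 1:]" 1] by (simp add: numeral_2_eq_2)
  finally show ?thesis
    using g by auto
qed

definition is_min_poly_over :: "'a::field set \<Rightarrow> 'a \<Rightarrow> 'a poly \<Rightarrow> bool" where
  "is_min_poly_over K y g \<longleftrightarrow> poly_over K g \<and> g \<noteq> 0 \<and> poly g y = 0 \<and>
     (\<forall>h. poly_over K h \<longrightarrow> h \<noteq> 0 \<longrightarrow> poly h y = 0 \<longrightarrow> degree g \<le> degree h)"

lemma min_poly_over_exists: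
  assumes "poly_over K f" "f \<noteq> 0" "poly f y = 0"
  shows "\<exists>g. is_min_poly_over K y g"
  using ex_has_least_nat[of "\<lambda>g. poly_over K g \<and> g \<noteq> 0 \<and> poly g y = 0" f degree] assms
  unfolding is_min_poly_over_def by blast

lemma min_poly_over_degree_pos:
  assumes "is_min_poly_over K y g"
  shows "degree g > 0"
proof (rule ccontr)
  assume "\<not> degree g > 0"
  then obtain c where "g = [:c:]"
    using degree_eq_zeroE by blast
  then show False
    using assms unfolding is_min_poly_over_def by simp
qed

lemma min_poly_over_pderiv_eq_0:
  assumes K: "is_subfield K" and g: "is_min_poly_over K y g" and insep: "\<not> rsquarefree g"
  shows "pderiv g = 0"
proof (rule ccontr)
  assume g'_0: "pderiv g \<noteq> 0"
  have K_ring: "is_subring K"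
    using K by (rule subfield_is_subring)
  have g_K: "poly_over K g" "g \<noteq> 0" "poly g y = 0"
    and g_min: "\<And>h. poly_over K h \<Longrightarrow> h \<noteq> 0 \<Longrightarrow> poly h y = 0 \<Longrightarrow> degree g \<le> degree h"
    using g unfolding is_min_poly_over_def by auto
  have g'_K: "poly_over K (pderiv g)"
    using g_K(1) by (rule poly_over_pderiv[OF K_ring])
  obtain h u v q where huvq: "poly_over K u" "poly_over K v" "poly_over K q"
    "h = u * g + v * pderiv g" "h \<noteq> 0" "g = q * h" "degree h \<le> degree (pderiv g)"
    using poly_over_bezout_divisor[OF K g_K(1) g'_K g'_0] by blast
  have "coeff (pderiv g) (degree (pderiv g)) \<noteq> 0"
    using g'_0 by simp
  then have "coeff g (Suc (degree (pderiv g))) \<noteq> 0"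
    unfolding coeff_pderiv by auto
  then have deg_g': "degree (pderiv g) < degree g"
    using le_degree by fastforce
  obtain a where "poly g a = 0" "poly (pderiv g) a = 0"
    using not_rsquarefree_common_root[OF g_K(2) insep] by blast
  then have "poly h a = 0"
    using huvq(4) by simp
  have deg_h: "degree h > 0"
  proof (rule ccontr)
    assume "\<not> degree h > 0"
    then obtain c where "h = [:c:]"
      using degree_eq_zeroE by blast
    then show False
      using huvq(5) \<open>poly h a = 0\<close> by simp
  qed
  \<comment> \<open>minimality of g forces h(y) \<noteq> 0, so q(y) = 0 and h is constant, contradicting h(a) = 0\<close>
  have "poly_over K h"
    unfolding huvq(4) using huvq(1,2) g_K(1) g'_K
    by (simp add: poly_over_add[OF K_ring] poly_over_mult[OF K_ring])
  then have "poly h y \<noteq> 0"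
    using g_min[of h] huvq(5,7) deg_g' by fastforce
  then have "poly q y = 0"
    using huvq(6) g_K(3) by simp
  moreover have "q \<noteq> 0"
    using huvq(6) g_K(2) by auto
  ultimately have "degree g \<le> degree q"
    using g_min huvq(3) by blast
  then show False
    using huvq(5,6) \<open>q \<noteq> 0\<close> deg_h by (simp add: degree_mult_eq)
qed

lemma homogeneous_system_nontrivial_solution:
  assumes K: "is_subfield K"
  shows "finite G \<Longrightarrow> finite I \<Longrightarrow> card G < card I \<Longrightarrow> (\<forall>i\<in>I. \<forall>g\<in>G. C i g \<in> K) \<Longrightarrow>
    \<exists>c. (\<forall>i\<in>I. c i \<in> K) \<and> (\<exists>i\<in>I. c i \<noteq> 0) \<and> (\<forall>g\<in>G. (\<Sum>i\<in>I. c i * C i g) = 0)"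
proof (induction G arbitrary: I C rule: finite_induct)
  case empty
  then obtain i where "i \<in> I"
    by fastforce
  then show ?case
    using subring_one[OF subfield_is_subring[OF K]] by (intro exI[of _ "\<lambda>_. 1"]) auto
next
  case (insert g G)
  show ?case
  proof (cases "\<forall>i\<in>I. C i g = 0")
    case True
    then show ?thesis
      using insert.IH[of I C] insert.prems insert.hyps by auto
  next
    case False
    \<comment> \<open>Gaussian elimination: solve the equation for g for the unknown at i0\<close>
    then obtain i0 where i0: "i0 \<in> I" "C i0 g \<noteq> 0"
      by blast
    define I' where "I' = I - {i0}"
    define C' where "C' i h = C i h - C i g / C i0 g * C i0 h" for i h
    have "card G < card I'"
      using insert i0 unfolding I'_def by (simp add: card_Diff_singleton)
    moreover have "\<forall>i\<in>I'. \<forall>h\<in>G. C' i h \<in> K"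
      using insert.prems(3) i0(1) unfolding C'_def I'_def
      by (auto intro!: subring_closed[OF subfield_is_subring[OF K]] subfield_divide[OF K])
    ultimately obtain d where d: "\<forall>i\<in>I'. d i \<in> K" "\<exists>i\<in>I'. d i \<noteq> 0"
      "\<forall>h\<in>G. (\<Sum>i\<in>I'. d i * C' i h) = 0"
      using insert.IH[of I' C'] insert.prems(1) unfolding I'_def by auto
    define c where "c i = (if i = i0 then - (\<Sum>j\<in>I'. d j * C j g) / C i0 g else d i)" for i
    have sum_eq: "(\<Sum>i\<in>I. c i * C i h) = (\<Sum>i\<in>I'. d i * C' i h)" for h
    proof -
      have "(\<Sum>i\<in>I. c i * C i h) = c i0 * C i0 h + (\<Sum>i\<in>I'. d i * C i h)"
        using insert.prems(1) i0(1) unfolding I'_def c_def by (simp add: sum.remove)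
      also have "\<dots> = (\<Sum>i\<in>I'. d i * C' i h)"
        unfolding c_def C'_def
        by (simp add: sum_divide_distrib sum_distrib_left sum_distrib_right sum_subtractf
            algebra_simps)
      finally show ?thesis .
    qed
    have "\<forall>h\<in>insert g G. (\<Sum>i\<in>I. c i * C i h) = 0"
      using d(3) i0(2) unfolding sum_eq C'_def by simp
    moreover have "\<forall>i\<in>I. c i \<in> K"
      using d(1) insert.prems(3) i0 unfolding c_def I'_def
      by (auto intro!: subring_closed[OF subfield_is_subring[OF K]] subfield_divide[OF K])
    moreover have "\<exists>i\<in>I. c i \<noteq> 0"
      using d(2) unfolding c_def I'_def by auto
    ultimately show ?thesis
      by blast
  qed
qed

lemma coeff_monom_sum: "coeff (\<Sum>i\<le>N. monom (c i) i) j = (if j \<le> N then c j else 0)"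
  by (simp add: coeff_sum coeff_monom)

lemma poly_monom_sum: "poly (\<Sum>i\<le>N. monom (c i) i) x = (\<Sum>i\<le>N. c i * x ^ i)"
  for x :: "'a::comm_semiring_1"
  by (simp add: poly_sum poly_monom)

lemma degree_monom_sum: "degree (\<Sum>i\<le>N. monom (c i) i) \<le> N"
  by (rule degree_le) (simp add: coeff_monom_sum)

lemma poly_over_monom_sum: "is_subring A \<Longrightarrow> (\<And>i. i \<le> N \<Longrightarrow> c i \<in> A) \<Longrightarrow> poly_over A (\<Sum>i\<le>N. monom (c i) i)"
  unfolding poly_over_def coeff_monom_sum by (auto intro: subring_zero)

lemma homogenize_sum:
  fixes s t :: "'a::field"
  assumes "t \<noteq> 0"
  shows "t ^ N * (\<Sum>i\<le>N. c i * (s / t) ^ i) = (\<Sum>i\<le>N. c i * (s ^ i * t ^ (N - i)))"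
  unfolding sum_distrib_left
proof (intro sum.cong refl)
  fix i assume "i \<in> {..N}"
  then have "t ^ N = t ^ i * t ^ (N - i)"
    by (simp flip: power_add)
  then show "t ^ N * (c i * (s / t) ^ i) = c i * (s ^ i * t ^ (N - i))"
    using assms by (simp add: field_simps)
qed

lemma algebraic_over_frac_field:
  assumes R: "is_subring R" and S: "is_subring S" and fin: "module_finite R S"
    and y: "y \<in> frac_field S"
  shows "\<exists>f. poly_over (frac_field R) f \<and> f \<noteq> 0 \<and> poly f y = 0"
proof -
  obtain s t where st: "y = s / t" "s \<in> S" "t \<in> S" "t \<noteq> 0"
    using y unfolding frac_field_def by blast
  obtain G where G: "finite G" "S = {(\<Sum>g\<in>G. c g * g) | c. \<forall>g\<in>G. c g \<in> R}"
    using fin unfolding module_finite_def by blast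
  define N where "N = card G"
  define v where "v i = s ^ i * t ^ (N - i)" for i
  have "v i \<in> S" for i
    unfolding v_def using st by (simp add: subring_mult[OF S] subring_power[OF S])
  then have "\<forall>i. \<exists>C. (\<forall>g\<in>G. C g \<in> R) \<and> v i = (\<Sum>g\<in>G. C g * g)"
    using G(2) by blast
  then obtain C where C: "\<And>i g. g \<in> G \<Longrightarrow> C i g \<in> R" "\<And>i. v i = (\<Sum>g\<in>G. C i g * g)"
    by metis
  \<comment> \<open>N + 1 > card G elements of the R-module S are linearly dependent over frac_field R\<close>
  have C_frac: "\<forall>i\<in>{..N}. \<forall>g\<in>G. C i g \<in> frac_field R"
    using C(1) subset_frac_field[OF R] by blast
  obtain c where c: "\<forall>i\<le>N. c i \<in> frac_field R" "\<exists>i\<le>N. c i \<noteq> 0"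
    "\<forall>g\<in>G. (\<Sum>i\<le>N. c i * C i g) = 0"
    using homogeneous_system_nontrivial_solution[OF frac_field_is_subfield[OF R] G(1) finite_atMost _ C_frac]
    unfolding N_def by auto
  define f where "f = (\<Sum>i\<le>N. monom (c i) i)"
  have "t ^ N * poly f y = (\<Sum>i\<le>N. c i * v i)"
    unfolding f_def poly_monom_sum st(1) v_def using st(4) by (rule homogenize_sum)
  also have "\<dots> = (\<Sum>g\<in>G. (\<Sum>i\<le>N. c i * C i g) * g)"
    unfolding C(2) by (simp add: sum_distrib_left sum_distrib_right mult.assoc sum.swap[of _ G])
  also have "\<dots> = 0"
    using c(3) by simp
  finally have "poly f y = 0"
    using st(4) by simp
  moreover have "f \<noteq> 0"
    using c(2) coeff_monom_sum[of c N] unfolding f_def by (metis coeff_0)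
  moreover have "poly_over (frac_field R) f"
    unfolding f_def using c(1) by (intro poly_over_monom_sum subfield_is_subring frac_field_is_subfield R) auto
  ultimately show ?thesis
    by blast
qed

lemma pderiv_eq_0_coeff_eq_0:
  fixes g :: "'a::idom poly"
  assumes "pderiv g = 0" "\<not> CHAR('a) dvd i"
  shows "coeff g i = 0"
proof (cases i)
  case (Suc j)
  have "of_nat (Suc j) * coeff g (Suc j) = 0"
    using assms(1) coeff_pderiv[of g j] by simp
  moreover have "of_nat (Suc j) \<noteq> (0::'a)"
    using assms(2) Suc of_nat_eq_0_iff_char_dvd by blast
  ultimately show ?thesis
    using Suc by simp
qed (use assms in simp)

lemma sum_atMost_multiples:
  fixes p m :: nat
  assumes "p > 0" "\<And>i. \<not> p dvd i \<Longrightarrow> f i = 0"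
  shows "(\<Sum>i\<le>p * m. f i) = (\<Sum>j\<le>m. f (p * j))"
proof -
  have "(\<Sum>j\<le>m. f (p * j)) = sum f ((*) p ` {..m})"
    using assms(1) by (subst sum.reindex) (auto simp: inj_on_def)
  also have "\<dots> = (\<Sum>i\<le>p * m. f i)"
  proof (intro sum.mono_neutral_left ballI)
    fix i assume i: "i \<in> {..p * m} - (*) p ` {..m}"
    have "\<not> p dvd i"
    proof
      assume "p dvd i"
      then obtain j where "i = p * j" ..
      then show False
        using i assms(1) by auto
    qed
    then show "f i = 0"
      by (rule assms(2))
  qed auto
  finally show ?thesis ..
qed

lemma alg_closed_root_exists:
  fixes x :: "'a::field"
  assumes alg_closed: "\<forall>f::'a poly. degree f \<ge> 1 \<longrightarrow> (\<exists>x. poly f x = 0)" and "n \<ge> 1"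
  shows "\<exists>z. z ^ n = x"
proof -
  have "degree (monom 1 n + [:- x:]) = n"
    using assms(2) by (subst degree_add_eq_left) (auto simp: degree_monom_eq)
  then obtain z where "poly (monom 1 n + [:- x:]) z = 0"
    using alg_closed assms(2) by metis
  then show ?thesis
    by (auto simp: poly_monom)
qed

lemma pderiv_eq_0_pth_power:
  fixes g :: "'a::field poly"
  assumes p: "prime CHAR('a)"
    and alg_closed: "\<forall>f::'a poly. degree f \<ge> 1 \<longrightarrow> (\<exists>x. poly f x = 0)"
    and g: "pderiv g = 0"
  shows "\<exists>m k. degree g = CHAR('a) * m \<and> (\<forall>j. k j ^ CHAR('a) = coeff g (CHAR('a) * j)) \<and>
    (\<forall>x. poly g x = (\<Sum>j\<le>m. k j * x ^ j) ^ CHAR('a))"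
proof -
  define q where "q = CHAR('a)"
  have q: "q > 0" "q \<ge> 1"
    using prime_gt_0_nat[OF p] unfolding q_def by auto
  have coeff_0: "coeff g i = 0" if "\<not> q dvd i" for i
    using pderiv_eq_0_coeff_eq_0[OF g] that unfolding q_def by blast
  have "q dvd degree g"
    using coeff_0[of "degree g"] by (cases "g = 0") auto
  then obtain m where m: "degree g = q * m" ..
  define k where "k j = (SOME z. z ^ q = coeff g (q * j))" for j
  have k: "k j ^ q = coeff g (q * j)" for j
    unfolding k_def using alg_closed_root_exists[OF alg_closed q(2)] by (rule someI_ex)
  have "poly g x = (\<Sum>j\<le>m. k j * x ^ j) ^ q" for x
  proof -
    have "poly g x = (\<Sum>i\<le>q * m. coeff g i * x ^ i)"
      unfolding m[symmetric] by (rule poly_altdef)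
    also have "\<dots> = (\<Sum>j\<le>m. coeff g (q * j) * x ^ (q * j))"
      using q(1) coeff_0 by (intro sum_atMost_multiples) auto
    also have "\<dots> = (\<Sum>j\<le>m. (k j * x ^ j) ^ q)"
      by (simp add: k power_mult_distrib mult.commute[of q] power_mult)
    also have "\<dots> = (\<Sum>j\<le>m. k j * x ^ j) ^ q"
      unfolding q_def by (rule freshmans_dream_sum[OF p refl, symmetric])
    finally show ?thesis .
  qed
  then show ?thesis
    using m k unfolding q_def by blast
qed

lemma poly_over_frac_field_common_denominator:
  assumes R: "is_subring R" and f: "poly_over (frac_field R) f"
  shows "\<exists>D\<in>R. D \<noteq> 0 \<and> poly_over R (smult D f)"
proof -
  obtain D where D: "D \<in> R" "D \<noteq> 0" "\<forall>i\<in>{..degree f}. D * coeff f i \<in> R"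
    using frac_field_common_denominator[OF R, of "{..degree f}" "coeff f"] f
    unfolding poly_over_def by auto
  have "D * coeff f i \<in> R" for i
    using D(3) subring_zero[OF R] by (cases "i \<le> degree f") (auto simp: coeff_eq_0)
  then show ?thesis
    using D(1,2) unfolding poly_over_def by auto
qed

lemma inseparable_pth_root_relation:
  assumes R: "is_subring R" and p: "prime CHAR('a)"
    and alg_closed: "\<forall>f::'a poly. degree f \<ge> 1 \<longrightarrow> (\<exists>x. poly f x = 0)"
    and alg: "poly_over (frac_field R) f" "f \<noteq> 0" "poly f y = 0"
    and insep: "\<not> separable_elem (frac_field R) (y::'a::field)"
  shows "\<exists>m k. (\<forall>j\<le>m. k j ^ CHAR('a) \<in> R) \<and> k m \<noteq> 0 \<and> (\<Sum>j\<le>m. k j * y ^ j) = 0 \<and>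
    (\<forall>h. poly_over (frac_field R) h \<longrightarrow> h \<noteq> 0 \<longrightarrow> poly h y = 0 \<longrightarrow> m < degree h)"
proof -
  define K where "K = frac_field R"
  obtain g where g: "is_min_poly_over K y g"
    using min_poly_over_exists[OF alg] unfolding K_def by blast
  then have g_K: "poly_over K g" "g \<noteq> 0" "poly g y = 0"
    and g_min: "\<And>h. poly_over K h \<Longrightarrow> h \<noteq> 0 \<Longrightarrow> poly h y = 0 \<Longrightarrow> degree g \<le> degree h"
    unfolding is_min_poly_over_def by auto
  have "\<not> rsquarefree g"
    using insep g_K unfolding separable_elem_def K_def by blast
  then have "pderiv g = 0"
    using min_poly_over_pderiv_eq_0[OF frac_field_is_subfield[OF R] g[unfolded K_def]] by blast
  obtain D where D: "D \<in> R" "D \<noteq> 0" "poly_over R (smult D g)"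
    using poly_over_frac_field_common_denominator[OF R g_K(1)[unfolded K_def]] by blast
  obtain m k where m: "degree g = CHAR('a) * m" and k: "\<forall>j. k j ^ CHAR('a) = D * coeff g (CHAR('a) * j)"
    and pth_power: "poly (smult D g) y = (\<Sum>j\<le>m. k j * y ^ j) ^ CHAR('a)"
    using pderiv_eq_0_pth_power[OF p alg_closed, of "smult D g"] \<open>pderiv g = 0\<close> D(2)
    by (auto simp: pderiv_smult)
  have "(\<Sum>j\<le>m. k j * y ^ j) = 0"
    using pth_power g_K(3) by simp
  moreover have "k m \<noteq> 0"
    using k m D(2) g_K(2) prime_gt_0_nat[OF p] by (metis leading_coeff_0_iff mult_eq_0_iff zero_power)
  moreover have "\<forall>j\<le>m. k j ^ CHAR('a) \<in> R"
    using k D(3) unfolding poly_over_def by simp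
  moreover have "m < degree g"
  proof -
    have "m > 0"
      using m min_poly_over_degree_pos[OF g] by (cases m) auto
    then show ?thesis
      unfolding m using prime_gt_1_nat[OF p] by (simp add: n_less_m_mult_n)
  qed
  then have "\<forall>h. poly_over (frac_field R) h \<longrightarrow> h \<noteq> 0 \<longrightarrow> poly h y = 0 \<longrightarrow> m < degree h"
    using g_min unfolding K_def by (auto intro: less_le_trans)
  ultimately show ?thesis
    by (intro exI[of _ m] exI[of _ k]) auto
qed

lemma root_ring_is_subring:
  assumes A: "is_subring A" and p: "prime CHAR('a)"
  shows "is_subring (root_ring A e :: 'a::field set)"
proof -
  define q where "q = CHAR('a) ^ e"
  have add: "(x + y) ^ q = x ^ q + y ^ q" for x y :: 'a
    unfolding q_def by (rule freshmans_dream'[OF p refl])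
  have diff: "(x - y) ^ q = x ^ q - y ^ q" for x y :: 'a
    using add[of "x - y" y] by (simp add: algebra_simps)
  have "q > 0"
    unfolding q_def using prime_gt_0_nat[OF p] by simp
  then have "(0::'a) ^ q \<in> A"
    by (simp add: power_0_left subring_zero[OF A])
  then show ?thesis
    unfolding is_subring_def root_ring_def q_def[symmetric] mem_Collect_eq add diff power_mult_distrib
    by (simp add: subring_zero[OF A] subring_one[OF A] subring_add[OF A] subring_diff[OF A]
        subring_mult[OF A])
qed

lemma subset_root_ring: "is_subring A \<Longrightarrow> A \<subseteq> root_ring A e"
  unfolding root_ring_def by (auto intro: subring_power)

lemma root_ring_mono: "A \<subseteq> B \<Longrightarrow> root_ring A e \<subseteq> root_ring B e"
  unfolding root_ring_def by auto

lemma root_ring_mono_exponent: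
  assumes "is_subring A" "d \<le> e"
  shows "root_ring A d \<subseteq> root_ring A e"
proof
  fix x assume "x \<in> root_ring A d"
  then have "(x ^ CHAR('a) ^ d) ^ CHAR('a) ^ (e - d) \<in> A"
    unfolding root_ring_def using assms(1) by (auto intro: subring_power)
  then show "x \<in> root_ring A e"
    unfolding root_ring_def using assms(2) by (simp flip: power_mult power_add)
qed

lemma hom_mod_add: "\<psi> \<in> hom_mod A M N \<Longrightarrow> x \<in> M \<Longrightarrow> y \<in> M \<Longrightarrow> \<psi> (x + y) = \<psi> x + \<psi> y"
  and hom_mod_scale: "\<psi> \<in> hom_mod A M N \<Longrightarrow> r \<in> A \<Longrightarrow> x \<in> M \<Longrightarrow> \<psi> (r * x) = r * \<psi> x"
  unfolding hom_mod_def by blast+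

lemma hom_mod_0:
  assumes "\<psi> \<in> hom_mod A M N" "0 \<in> M"
  shows "\<psi> 0 = 0"
  using hom_mod_add[OF assms(1,2,2)] by (metis add_0 add_cancel_right_right)

lemma hom_mod_linear_combination:
  assumes \<psi>: "\<psi> \<in> hom_mod A M N" and M: "is_subring M" "A \<subseteq> M"
  shows "(\<And>j. j \<in> J \<Longrightarrow> a j \<in> A \<and> m j \<in> M) \<Longrightarrow>
    \<psi> (\<Sum>j\<in>J. a j * m j) = (\<Sum>j\<in>J. a j * \<psi> (m j))"
proof (induction J rule: infinite_finite_induct)
  case (insert j J)
  have "a i * m i \<in> M" if "i \<in> insert j J" for i
    using insert.prems[OF that] M(2) by (auto intro: subring_mult[OF M(1)])
  then have "a j * m j \<in> M" "(\<Sum>i\<in>J. a i * m i) \<in> M"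
    by (auto intro: subring_sum[OF M(1)])
  then have "\<psi> (\<Sum>i\<in>insert j J. a i * m i) = \<psi> (a j * m j) + \<psi> (\<Sum>i\<in>J. a i * m i)"
    using insert.hyps hom_mod_add[OF \<psi>] by simp
  also have "\<dots> = a j * \<psi> (m j) + (\<Sum>i\<in>J. a i * \<psi> (m i))"
    using insert.prems insert.IH hom_mod_scale[OF \<psi>] by simp
  finally show ?case
    using insert.hyps by simp
qed (simp_all add: hom_mod_0[OF \<psi> subring_zero[OF M(1)]])

lemma extended_hom_kills_relation:
  assumes R: "is_subring R" and S: "is_subring S" and RS: "R \<subseteq> S" and p: "prime CHAR('a)"
    and y: "y \<in> frac_field S"
    and indep: "\<And>h. poly_over R h \<Longrightarrow> degree h \<le> m \<Longrightarrow> poly h y = 0 \<Longrightarrow> h = 0"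
    and k: "\<And>j. j \<le> m \<Longrightarrow> k j \<in> root_ring R e" and rel: "(\<Sum>j\<le>m. k j * y ^ j) = 0"
    and \<psi>: "\<psi> \<in> hom_mod S (root_ring S e) S" and \<psi>_R: "\<And>x. x \<in> root_ring R e \<Longrightarrow> \<psi> x \<in> R"
    and j: "j \<le> m"
  shows "\<psi> (k j) = (0::'a::field)"
proof -
  obtain s t where st: "y = s / t" "s \<in> S" "t \<in> S" "t \<noteq> 0"
    using y unfolding frac_field_def by blast
  have k_S: "k j \<in> root_ring S e" if "j \<le> m" for j
    using root_ring_mono[OF RS] k[OF that] by blast
  have S_root: "is_subring (root_ring S e)" "S \<subseteq> root_ring S e"
    using root_ring_is_subring[OF S p] subset_root_ring[OF S] .
  have coeff_S: "s ^ j * t ^ (m - j) \<in> S" for j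
    using st by (simp add: subring_mult[OF S] subring_power[OF S])
  define h where "h = (\<Sum>j\<le>m. monom (\<psi> (k j)) j)"
  \<comment> \<open>clear the denominator of y to get a relation with coefficients in S, to which \<psi> applies\<close>
  have "t ^ m * (\<Sum>j\<le>m. \<psi> (k j) * y ^ j) = (\<Sum>j\<le>m. \<psi> (k j) * (s ^ j * t ^ (m - j)))"
    unfolding st(1) using st(4) by (rule homogenize_sum)
  also have "\<dots> = \<psi> (\<Sum>j\<le>m. (s ^ j * t ^ (m - j)) * k j)"
  proof -
    have "\<psi> (\<Sum>j\<le>m. (s ^ j * t ^ (m - j)) * k j) = (\<Sum>j\<le>m. (s ^ j * t ^ (m - j)) * \<psi> (k j))"
      by (rule hom_mod_linear_combination[OF \<psi> S_root]) (use coeff_S k_S in auto)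
    then show ?thesis
      by (simp add: ac_simps)
  qed
  also have "(\<Sum>j\<le>m. (s ^ j * t ^ (m - j)) * k j) = t ^ m * (\<Sum>j\<le>m. k j * y ^ j)"
    unfolding st(1) using homogenize_sum[OF st(4), of m k s] by (simp add: mult.commute)
  also have "\<psi> (t ^ m * (\<Sum>j\<le>m. k j * y ^ j)) = 0"
    using rel hom_mod_0[OF \<psi> subring_zero[OF S_root(1)]] by simp
  finally have "poly h y = 0"
    unfolding h_def using st(4) by (simp add: poly_monom_sum)
  moreover have "poly_over R h"
    unfolding h_def by (intro poly_over_monom_sum R \<psi>_R k)
  moreover have "degree h \<le> m"
    unfolding h_def by (rule degree_monom_sum)
  ultimately have "h = 0"
    using indep by blast
  then show ?thesis
    using coeff_monom_sum[of "\<lambda>j. \<psi> (k j)" m j] j unfolding h_def by simp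
qed

lemma hom_mod_root_ring_eq_0_if_vanishes_on_multiples:
  assumes A: "is_subring A" and p: "prime CHAR('a)"
    and \<phi>: "\<phi> \<in> hom_mod A (root_ring A e) A"
    and \<kappa>: "\<kappa> \<in> root_ring A e" "\<kappa> \<noteq> 0"
    and vanishes: "\<And>c. c \<in> root_ring A e \<Longrightarrow> \<phi> (c * \<kappa>) = 0"
    and x: "x \<in> root_ring A e"
  shows "\<phi> x = (0::'a::field)"
proof -
  define q where "q = CHAR('a) ^ e"
  have "q > 0"
    unfolding q_def using prime_gt_0_nat[OF p] by simp
  have \<kappa>_q: "\<kappa> ^ q \<in> A"
    using \<kappa>(1) unfolding root_ring_def q_def by simp
  \<comment> \<open>take c = x \<kappa>^(q-1), so that c \<kappa> = \<kappa>^q x with \<kappa>^q \<in> A\<close>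
  have "x * \<kappa> ^ (q - 1) \<in> root_ring A e"
    using root_ring_is_subring[OF A p] x \<kappa>(1) by (simp add: subring_mult subring_power)
  have "\<kappa> ^ q * \<phi> x = \<phi> (\<kappa> ^ q * x)"
    using hom_mod_scale[OF \<phi> \<kappa>_q x] by simp
  also have "\<kappa> ^ q * x = x * \<kappa> ^ (q - 1) * \<kappa>"
    using power_minus_mult[OF \<open>q > 0\<close>, of \<kappa>] by (simp add: ac_simps)
  also have "\<phi> \<dots> = 0"
    by (rule vanishes) fact
  finally show ?thesis
    using \<kappa>(2) by simp
qed

theorem proposition5p2:
  fixes R S :: "'a::field set" and e :: nat and \<phi> :: "'a \<Rightarrow> 'a"
  assumes char_p: "prime CHAR('a)"
    and alg_closed: "\<forall>f::'a poly. degree f \<ge> 1 \<longrightarrow> (\<exists>x. poly f x = 0)"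
    and RS: "R \<subseteq> S"
    and normR: "normal_domain R" and normS: "normal_domain S"
    and FfinR: "F_finite R" and FfinS: "F_finite S"
    and modfin: "module_finite R S"
    and insep: "\<not> separable_ext (frac_field R) (frac_field S)"
    and e: "e \<ge> 1"
    and phi: "\<phi> \<in> hom_mod R (root_ring R e) R"
    and ext: "\<exists>\<psi> \<in> hom_mod S (root_ring S e) S. \<forall>x\<in>root_ring R e. \<psi> x = \<phi> x"
  shows "\<forall>x\<in>root_ring R e. \<phi> x = 0"
proof -
  have R: "is_subring R" and S: "is_subring S"
    using normR normS unfolding normal_domain_def by auto
  obtain y where y: "y \<in> frac_field S" "\<not> separable_elem (frac_field R) y"
    using insep unfolding separable_ext_def by blast
  obtain f where "poly_over (frac_field R) f" "f \<noteq> 0" "poly f y = 0"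
    using algebraic_over_frac_field[OF R S modfin y(1)] by blast
  then obtain m k where k: "\<forall>j\<le>m. k j ^ CHAR('a) \<in> R" "k m \<noteq> 0" "(\<Sum>j\<le>m. k j * y ^ j) = 0"
    and deg: "\<forall>h. poly_over (frac_field R) h \<longrightarrow> h \<noteq> 0 \<longrightarrow> poly h y = 0 \<longrightarrow> m < degree h"
    using inseparable_pth_root_relation[OF R char_p alg_closed _ _ _ y(2)] by blast
  have k_root: "k j \<in> root_ring R e" if "j \<le> m" for j
    using k(1) that root_ring_mono_exponent[OF R e] unfolding root_ring_def by auto
  obtain \<psi> where \<psi>: "\<psi> \<in> hom_mod S (root_ring S e) S" "\<forall>x\<in>root_ring R e. \<psi> x = \<phi> x"
    using ext by blast
  have "\<phi> (c * k m) = 0" if c: "c \<in> root_ring R e" for c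
  proof -
    have "\<psi> (c * k m) = 0"
    proof (rule extended_hom_kills_relation[OF R S RS char_p y(1), where k = "\<lambda>j. c * k j" and j = m])
      show "h = 0" if "poly_over R h" "degree h \<le> m" "poly h y = 0" for h
        using deg poly_over_mono[OF subset_frac_field[OF R] that(1)] that(2,3) by fastforce
      show "c * k j \<in> root_ring R e" if "j \<le> m" for j
        using root_ring_is_subring[OF R char_p] c k_root[OF that] by (rule subring_mult)
      show "(\<Sum>j\<le>m. c * k j * y ^ j) = 0"
        using k(3) by (simp add: sum_distrib_left mult.assoc flip: sum_distrib_left)
    qed (use \<psi> phi in \<open>auto simp: hom_mod_def\<close>)
    then show ?thesis
      using \<psi>(2) root_ring_is_subring[OF R char_p] c k_root[of m] by (simp add: subring_mult)
  qed
  then show ?thesis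
    using hom_mod_root_ring_eq_0_if_vanishes_on_multiples[OF R char_p phi k_root[OF order.refl] k(2)]
    by blast
qed

end
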